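(* Let $\mathcal{M}$ be the set of compactly supported probability distributions on $\mathbb{R}$ and let $\mathcal{D}^R=\{T_d: d \text{ a right-continuous distortion function}\}$. Let $T:\mathcal{M}\to\mathcal{M}$ be monotone. Then $\mathcal{D}^R\circ T=T\circ\mathcal{D}^R$ if and only if $T=T_d\circ T^u$ for some increasing left-continuous function $u:\mathbb{R}\to\mathbb{R}$ and some strictly increasing continuous distortion function $d$.
   Context: Increasing means non-decreasing. A distortion function is an increasing function $d:[0,1]\to[0,1]$ with $d(0)=0$, $d(1)=1$. $T_d(F)(x)=\lim_{y\downarrow x}d(F(y))$. For an increasing function $u:\mathbb{R}\to\mathbb{R}$, $T^u(F)=F\circ u^{-1}$ is the distribution of $u(X)$ when $X\sim F$. For a set $\mathcal{T}$ of maps $\mathcal{M}\to\mathcal{M}$, $\mathcal{T}\circ T=\{T'\circ T:T'\in\mathcal{T}\}$ and $T\circ\mathcal{T}=\{T\circ T':T'\in\mathcal{T}\}$. For $F,G\in\mathcal{M}$, $F\le_{\rm st}G$ means $F(x)\ge G(x)$ for all $x$; $T$ is monotone if $F\le_{\rm st}G$ implies $T(F)\le_{\rm st}T(G)$. *)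

theory Defs
  imports "HOL-Analysis.Analysis"
begin

text \<open>Distributions are represented by their distribution functions (CDFs).
  The class M: compactly supported probability distributions on the reals.\<close>
definition cdfM :: "(real \<Rightarrow> real) set" where
  "cdfM = {F. mono F \<and> (\<forall>x. continuous (at_right x) F) \<and>
              (\<exists>a b. (\<forall>x<a. F x = 0) \<and> (\<forall>x\<ge>b. F x = 1))}"

text \<open>Distortion function: increasing on [0,1], d 0 = 0, d 1 = 1
  (only the values on [0,1] matter).\<close>
definition distortion :: "(real \<Rightarrow> real) \<Rightarrow> bool" where
  "distortion d \<longleftrightarrow> mono_on {0..1} d \<and> d 0 = 0 \<and> d 1 = 1"

definition right_cont_distortion :: "(real \<Rightarrow> real) \<Rightarrow> bool" where
  "right_cont_distortion d \<longleftrightarrow> distortion d \<and> (\<forall>x\<in>{0..<1}. (d \<longlongrightarrow> d x) (at_right x))"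

definition Td :: "(real \<Rightarrow> real) \<Rightarrow> (real \<Rightarrow> real) \<Rightarrow> (real \<Rightarrow> real)" where
  "Td d F = (\<lambda>x. Lim (at_right x) (\<lambda>y. d (F y)))"

text \<open>T^u(F) = F \<circ> u^{-1}: the CDF of u(X) for X with CDF F, i.e.
  y \<mapsto> P(u(X) \<le> y), computed with the Lebesgue-Stieltjes measure of F.\<close>
definition Tu :: "(real \<Rightarrow> real) \<Rightarrow> (real \<Rightarrow> real) \<Rightarrow> (real \<Rightarrow> real)" where
  "Tu u F = (\<lambda>y. measure (interval_measure F) {x. u x \<le> y})"

definition st_le :: "(real \<Rightarrow> real) \<Rightarrow> (real \<Rightarrow> real) \<Rightarrow> bool" where
  "st_le F G \<longleftrightarrow> (\<forall>x. F x \<ge> G x)"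

definition monotoneT :: "((real \<Rightarrow> real) \<Rightarrow> (real \<Rightarrow> real)) \<Rightarrow> bool" where
  "monotoneT T \<longleftrightarrow> (\<forall>F\<in>cdfM. \<forall>G\<in>cdfM. st_le F G \<longrightarrow> st_le (T F) (T G))"

text \<open>Maps M \<rightarrow> M are compared extensionally on M.
  D^R \<circ> T = {T_d \<circ> T : d right-continuous distortion},
  T \<circ> D^R = {T \<circ> T_d : d right-continuous distortion}; set equality.\<close>
definition commutes_DR :: "((real \<Rightarrow> real) \<Rightarrow> (real \<Rightarrow> real)) \<Rightarrow> bool" where
  "commutes_DR T \<longleftrightarrow>
     (\<forall>d1. right_cont_distortion d1 \<longrightarrow>
        (\<exists>d2. right_cont_distortion d2 \<and> (\<forall>F\<in>cdfM. Td d1 (T F) = T (Td d2 F)))) \<and>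
     (\<forall>d1. right_cont_distortion d1 \<longrightarrow>
        (\<exists>d2. right_cont_distortion d2 \<and> (\<forall>F\<in>cdfM. T (Td d1 F) = Td d2 (T F))))"

end

theory Submission
  imports Defs "HOL-Probability.Distribution_Functions"
begin

text \<open>Step distortions s_t(r) = 1{t \<le> r} turn a distribution function F into the Dirac
  measure at its t-quantile and fix every Dirac measure. So if T commutes with D^R, then T maps
  the Dirac at x to the Dirac at u(x), with u increasing, and every step distortion s_t is matched
  by distortions e_t, e'_t with T_{s_t} \<circ> T = T \<circ> T_{e_t} and T \<circ> T_{s_t} = T_{e'_t} \<circ> T.
  If u is not constant, two-point laws with atoms a, b such that u(a) < u(b) show that T never
  maps a genuine two-point law to a Dirac measure; hence e_t is itself a step distortion, at a
  level \<sigma>(t), and t \<le> T(F)(y) iff u(F^{-1}(\<sigma>(t))) \<le> y. Comparing with the levels \<tau>(s) at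
  which the e'_s reach 1 shows that \<sigma> and \<tau> are mutually inverse increasing bijections of
  (0, 1], so that T(F) = \<tau> \<circ> F \<circ> u^{-1} where \<tau>, extended by \<tau>(0) = 0, is a homeomorphism of
  [0, 1]; uniform laws force u to be left-continuous. If u is constant, T is constant by
  monotonicity. Conversely, T_d \<circ> T^u conjugates T_e into T_{d \<circ> e \<circ> d^{-1}} and
  T_{d^{-1} \<circ> e \<circ> d}.\<close>

lemma continuous_on_mono_onto_interval:
  fixes f :: "real \<Rightarrow> real"
  assumes "a \<le> b" and mono: "mono_on {a..b} f" and onto: "f ` {a..b} = {c..d}"
  shows "continuous_on {a..b} f"
proof -
  \<comment> \<open>extended linearly outside [a, b], f becomes a monotone surjection of the reals\<close>
  define g where "g x = (if x < a then c - (a - x) else if b < x then d + (x - b) else f x)" for x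
  have range: "c \<le> f x" "f x \<le> d" if "x \<in> {a..b}" for x
    using that onto by auto
  then have "c \<le> d" using \<open>a \<le> b\<close> by force
  have "mono g"
  proof (rule monoI)
    fix x y :: real assume "x \<le> y"
    then show "g x \<le> g y"
      using range[of x] range[of y] mono_onD[OF mono, of x y] \<open>a \<le> b\<close> \<open>c \<le> d\<close>
      by (auto simp: g_def)
  qed
  moreover have g_onto: "y \<in> range g" for y
  proof -
    consider "y < c" | "d < y" | "y \<in> {c..d}" by force
    then show ?thesis
    proof cases
      case 1
      then have "g (a - (c - y)) = y" by (simp add: g_def)
      then show ?thesis by (metis rangeI)
    next
      case 2
      then have "g (b + (y - d)) = y" using \<open>a \<le> b\<close> by (simp add: g_def)
      then show ?thesis by (metis rangeI)
    next
      case 3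
      then obtain x where "x \<in> {a..b}" "f x = y" using onto by (metis imageE)
      then have "g x = y" by (simp add: g_def)
      then show ?thesis by (metis rangeI)
    qed
  qed
  ultimately have "continuous_on UNIV g"
    by (intro continuous_onI_mono) (metis UNIV_eq_I open_UNIV, simp add: monoD)
  then have "continuous_on {a..b} g" by (rule continuous_on_subset) simp
  then show ?thesis by (rule continuous_on_cong[THEN iffD1, rotated 2]) (simp_all add: g_def)
qed

lemma cdfM_D:
  assumes "F \<in> cdfM"
  shows "mono F" "continuous (at_right x) F" "\<exists>a b. (\<forall>x<a. F x = 0) \<and> (\<forall>x\<ge>b. F x = 1)"
  using assms unfolding cdfM_def by auto

lemma cdfM_I:
  assumes "mono F" "\<And>x. continuous (at_right x) F" "\<And>x. x < a \<Longrightarrow> F x = 0" "\<And>x. b \<le> x \<Longrightarrow> F x = 1"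
  shows "F \<in> cdfM"
  using assms unfolding cdfM_def by blast

lemma cdfM_range:
  assumes "F \<in> cdfM"
  shows "0 \<le> F x" "F x \<le> 1"
proof -
  obtain a b where ab: "\<forall>x<a. F x = 0" "\<forall>x\<ge>b. F x = 1" using cdfM_D(3)[OF assms] by blast
  have "F (min x (a - 1)) \<le> F x" "F x \<le> F (max x b)"
    by (simp_all add: monoD[OF cdfM_D(1)[OF assms]])
  then show "0 \<le> F x" "F x \<le> 1" using ab by simp_all
qed

lemma cdfM_tendsto:
  assumes "F \<in> cdfM"
  shows "(F \<longlongrightarrow> 0) at_bot" "(F \<longlongrightarrow> 1) at_top"
proof -
  obtain a b where ab: "\<forall>x<a. F x = 0" "\<forall>x\<ge>b. F x = 1" using cdfM_D(3)[OF assms] by blast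
  have "eventually (\<lambda>x. F x = 0) at_bot" "eventually (\<lambda>x. F x = 1) at_top"
    unfolding eventually_at_bot_dense eventually_at_top_linorder using ab by blast+
  then show "(F \<longlongrightarrow> 0) at_bot" "(F \<longlongrightarrow> 1) at_top" by (simp_all add: tendsto_eventually)
qed

lemma right_cont_distortionD:
  assumes "right_cont_distortion d"
  shows "d 0 = 0" "d 1 = 1" "\<lbrakk>0 \<le> r; r \<le> r'; r' \<le> 1\<rbrakk> \<Longrightarrow> d r \<le> d r'"
    "\<lbrakk>0 \<le> r; r < 1\<rbrakk> \<Longrightarrow> continuous (at_right r) d"
  using assms unfolding right_cont_distortion_def distortion_def continuous_within
  by (auto intro: mono_onD)

lemma right_cont_distortionI:
  assumes "\<And>r r'. \<lbrakk>0 \<le> r; r \<le> r'; r' \<le> 1\<rbrakk> \<Longrightarrow> d r \<le> d r'" "d 0 = 0" "d 1 = 1"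
    and "\<And>r. \<lbrakk>0 \<le> r; r < 1\<rbrakk> \<Longrightarrow> continuous (at_right r) d"
  shows "right_cont_distortion d"
  using assms unfolding right_cont_distortion_def distortion_def continuous_within
  by (auto intro: mono_onI)

lemma right_cont_distortion_range:
  assumes "right_cont_distortion d" "0 \<le> r" "r \<le> 1"
  shows "0 \<le> d r" "d r \<le> 1"
  using right_cont_distortionD[OF assms(1)] assms(2,3) by (metis order.refl zero_le_one)+

lemma continuous_at_right_distortion_comp:
  assumes d: "right_cont_distortion d" and G: "continuous (at_right x) G" "0 \<le> G x"
    and above: "\<forall>\<^sub>F y in at_right x. G y \<in> {G x..1}"
  shows "continuous (at_right x) (\<lambda>y. d (G y))"
proof -
  have "continuous (at (G x) within {G x..1}) d"
  proof (cases "G x < 1")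
    case True
    then show ?thesis using right_cont_distortionD(4)[OF d G(2)]
      by (simp add: at_within_Icc_at_right)
  next
    case False
    then have "{G x..1} - {G x} = {}" by auto
    then have "at (G x) within {G x..1} = bot"
      by (metis at_within_eq_bot_iff closure_empty empty_iff)
    then show ?thesis by (simp add: continuous_within)
  qed
  then show ?thesis
    using continuous_within_tendsto_compose[OF _ above] G(1) by (simp add: continuous_within)
qed

lemma eventually_cdfM_above:
  assumes "F \<in> cdfM"
  shows "\<forall>\<^sub>F y in at_right x. F y \<in> {F x..1}"
  using eventually_at_right_less[of x]
  by eventually_elim (simp add: cdfM_range[OF assms] monoD[OF cdfM_D(1)[OF assms]])

lemma distortion_comp_cdfM:
  assumes d: "right_cont_distortion d" and F: "F \<in> cdfM"
  shows "(\<lambda>x. d (F x)) \<in> cdfM"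
proof -
  obtain a b where ab: "\<forall>x<a. F x = 0" "\<forall>x\<ge>b. F x = 1" using cdfM_D(3)[OF F] by blast
  show ?thesis
  proof (rule cdfM_I)
    show "mono (\<lambda>x. d (F x))"
      by (intro monoI right_cont_distortionD(3)[OF d])
        (simp_all add: cdfM_range[OF F] monoD[OF cdfM_D(1)[OF F]])
    show "continuous (at_right x) (\<lambda>x. d (F x))" for x
      using continuous_at_right_distortion_comp[OF d cdfM_D(2)[OF F] cdfM_range(1)[OF F]
          eventually_cdfM_above[OF F]] .
    show "d (F x) = 0" if "x < a" for x using that ab right_cont_distortionD(1)[OF d] by simp
    show "d (F x) = 1" if "b \<le> x" for x using that ab right_cont_distortionD(2)[OF d] by simp
  qed
qed

lemma Td_eq_comp:
  assumes "right_cont_distortion d" "F \<in> cdfM"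
  shows "Td d F = (\<lambda>x. d (F x))"
  unfolding Td_def
  using distortion_comp_cdfM[OF assms, THEN cdfM_D(2)]
  by (intro ext tendsto_Lim) (simp_all add: continuous_within)

lemma Td_cdfM: "right_cont_distortion d \<Longrightarrow> F \<in> cdfM \<Longrightarrow> Td d F \<in> cdfM"
  by (simp add: Td_eq_comp distortion_comp_cdfM)

lemma continuous_at_right_if_le:
  fixes f g :: "real \<Rightarrow> real"
  assumes "continuous (at_right x) f" "continuous (at_right x) g"
  shows "continuous (at_right x) (\<lambda>y. if c \<le> y then f y else g y)"
proof (cases "c \<le> x")
  case True
  have "\<forall>\<^sub>F y in at_right x. (if c \<le> y then f y else g y) = f y"
    using True by (auto simp: eventually_at_right_field intro: exI[of _ "x + 1"])
  then show ?thesis using assms(1) True unfolding continuous_within by (simp add: tendsto_cong)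
next
  case False
  have "\<forall>\<^sub>F y in at_right x. (if c \<le> y then f y else g y) = g y"
    using False by (auto simp: eventually_at_right_field intro: exI[of _ c])
  then show ?thesis using assms(2) False unfolding continuous_within by (simp add: tendsto_cong)
qed

definition unit_step :: "real \<Rightarrow> real \<Rightarrow> real" where
  "unit_step c = (\<lambda>x. if c \<le> x then 1 else 0)"

definition two_point_cdf :: "real \<Rightarrow> real \<Rightarrow> real \<Rightarrow> real \<Rightarrow> real" where
  "two_point_cdf a b r = (\<lambda>x. if b \<le> x then 1 else if a \<le> x then r else 0)"

definition uniform_cdf :: "real \<Rightarrow> real \<Rightarrow> real" where
  "uniform_cdf b = (\<lambda>x. max 0 (min 1 (x - b + 1)))"

lemma unit_step_cdfM: "unit_step c \<in> cdfM"
  unfolding unit_step_def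
  by (rule cdfM_I[of _ c c]) (auto intro: monoI continuous_at_right_if_le)

lemma two_point_cdfM: "a \<le> b \<Longrightarrow> 0 \<le> r \<Longrightarrow> r \<le> 1 \<Longrightarrow> two_point_cdf a b r \<in> cdfM"
  unfolding two_point_cdf_def
  by (rule cdfM_I[of _ a b]) (auto intro: monoI intro!: continuous_at_right_if_le continuous_const)

lemma uniform_cdfM: "uniform_cdf b \<in> cdfM"
  unfolding uniform_cdf_def
proof (rule cdfM_I[of _ "b - 1" b])
  show "continuous (at_right x) (\<lambda>x. max 0 (min 1 (x - b + 1)))" for x
    by (intro continuous_intros)
  show "mono (\<lambda>x. max 0 (min 1 (x - b + 1)))"
    by (intro monoI max.mono min.mono) simp_all
qed simp_all

lemma unit_step_right_cont_distortion: "0 < t \<Longrightarrow> t \<le> 1 \<Longrightarrow> right_cont_distortion (unit_step t)"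
  unfolding unit_step_def by (rule right_cont_distortionI) (auto intro: continuous_at_right_if_le)

lemma two_point_right_cont_distortion:
  "0 < a \<Longrightarrow> a \<le> b \<Longrightarrow> b \<le> 1 \<Longrightarrow> 0 \<le> r \<Longrightarrow> r \<le> 1 \<Longrightarrow> right_cont_distortion (two_point_cdf a b r)"
  unfolding two_point_cdf_def
  by (rule right_cont_distortionI) (auto intro!: continuous_at_right_if_le continuous_const)

definition quantile :: "(real \<Rightarrow> real) \<Rightarrow> real \<Rightarrow> real" where
  "quantile F t = Inf {y. t \<le> F y}"

lemma quantile_le_iff:
  assumes F: "F \<in> cdfM" and t: "0 < t" "t \<le> 1"
  shows "quantile F t \<le> y \<longleftrightarrow> t \<le> F y"
proof -
  obtain a b where ab: "\<forall>x<a. F x = 0" "\<forall>x\<ge>b. F x = 1" using cdfM_D(3)[OF F] by blast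
  define S where "S = {y. t \<le> F y}"
  have "b \<in> S" using ab t unfolding S_def by auto
  have bdd: "bdd_below S"
    using ab(1) t by (intro bdd_belowI[of _ a]) (force simp: S_def not_less[symmetric])
  have up: "t \<le> F z" if z: "Inf S < z" for z
  proof -
    obtain s where "s \<in> S" "s < z" using cInf_less_iff[of S z] \<open>b \<in> S\<close> bdd z by auto
    then show ?thesis unfolding S_def using monoD[OF cdfM_D(1)[OF F], of s z] by auto
  qed
  have "t \<le> F (Inf S)"
    \<comment> \<open>the infimum is attained by right-continuity\<close>
  proof (rule tendsto_lowerbound)
    show "(F \<longlongrightarrow> F (Inf S)) (at_right (Inf S))"
      using cdfM_D(2)[OF F] by (simp add: continuous_within)
    show "\<forall>\<^sub>F z in at_right (Inf S). t \<le> F z"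
      using eventually_at_right_less by (rule eventually_mono) (rule up)
  qed simp
  then show ?thesis
    using cInf_lower[OF _ bdd, of y] monoD[OF cdfM_D(1)[OF F], of "Inf S" y]
    unfolding quantile_def S_def[symmetric] by (auto simp: S_def)
qed

lemma quantile_eqI:
  assumes "F \<in> cdfM" "0 < t" "t \<le> 1" and "\<And>y. t \<le> F y \<longleftrightarrow> q \<le> y"
  shows "quantile F t = q"
  using quantile_le_iff[OF assms(1-3)] assms(4) by (metis order.antisym order.refl)

lemma unit_step_comp_cdfM:
  assumes "F \<in> cdfM" "0 < t" "t \<le> 1"
  shows "(\<lambda>y. unit_step t (F y)) = unit_step (quantile F t)"
  using quantile_le_iff[OF assms] unfolding unit_step_def by auto

lemma Td_unit_step:
  assumes "F \<in> cdfM" "0 < t" "t \<le> 1"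
  shows "Td (unit_step t) F = unit_step (quantile F t)"
  using Td_eq_comp[OF unit_step_right_cont_distortion[OF assms(2,3)] assms(1)]
    unit_step_comp_cdfM[OF assms] by simp

lemma quantile_unit_step: "0 < t \<Longrightarrow> t \<le> 1 \<Longrightarrow> quantile (unit_step c) t = c"
  by (rule quantile_eqI[OF unit_step_cdfM]) (auto simp: unit_step_def)

lemma unit_step_inject: "unit_step p = unit_step q \<longleftrightarrow> p = q"
  using quantile_unit_step[of 1] by (metis order.refl zero_less_one)

lemma quantile_two_point:
  assumes "a \<le> b" "0 \<le> r" "r \<le> 1" "0 < s" "s \<le> 1"
  shows "quantile (two_point_cdf a b r) s = (if s \<le> r then a else b)"
  using assms by (intro quantile_eqI two_point_cdfM) (auto simp: two_point_cdf_def)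

lemma quantile_uniform: "0 < s \<Longrightarrow> s \<le> 1 \<Longrightarrow> quantile (uniform_cdf b) s = b - 1 + s"
  by (rule quantile_eqI[OF uniform_cdfM]) (auto simp: uniform_cdf_def)

definition threshold :: "(real \<Rightarrow> real) \<Rightarrow> real" where
  "threshold f = Inf {r \<in> {0..1}. f r = 1}"

lemma threshold:
  assumes f: "right_cont_distortion f"
  shows "0 < threshold f" "threshold f \<le> 1" "\<lbrakk>0 \<le> r; r \<le> 1\<rbrakk> \<Longrightarrow> f r = 1 \<longleftrightarrow> threshold f \<le> r"
proof -
  define A where "A = {r \<in> {0..1}. f r = 1}"
  have "1 \<in> A" using right_cont_distortionD(2)[OF f] unfolding A_def by simp
  have bdd: "bdd_below A" unfolding A_def by (auto intro: bdd_belowI[of _ 0])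
  have "0 \<le> Inf A" using \<open>1 \<in> A\<close> by (intro cInf_greatest) (auto simp: A_def)
  have above: "f z = 1" if z: "Inf A < z" "z \<le> 1" for z
  proof -
    obtain s where s: "s \<in> A" "s < z" using cInf_less_iff[of A z] \<open>1 \<in> A\<close> bdd z by auto
    then have "f s \<le> f z" "f z \<le> 1"
      using z right_cont_distortionD(3)[OF f, of s z] right_cont_distortion_range[OF f, of z]
      by (auto simp: A_def)
    then show ?thesis using s by (simp add: A_def)
  qed
  have inf: "f (Inf A) = 1"
    \<comment> \<open>by right-continuity, unless the infimum is 1 itself\<close>
  proof (cases "Inf A < 1")
    case True
    have "\<forall>\<^sub>F z in at_right (Inf A). f z = 1"
      using True by (auto simp: eventually_at_right_field intro!: exI[of _ 1] above)
    then have "(f \<longlongrightarrow> 1) (at_right (Inf A))" by (rule tendsto_eventually)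
    moreover have "(f \<longlongrightarrow> f (Inf A)) (at_right (Inf A))"
      using right_cont_distortionD(4)[OF f \<open>0 \<le> Inf A\<close> True] by (simp add: continuous_within)
    ultimately show ?thesis using tendsto_unique by force
  next
    case False
    then show ?thesis using cInf_lower[OF \<open>1 \<in> A\<close> bdd] right_cont_distortionD(2)[OF f] by simp
  qed
  then show "0 < threshold f"
    using \<open>0 \<le> Inf A\<close> right_cont_distortionD(1)[OF f] unfolding threshold_def A_def[symmetric]
    by (metis order.not_eq_order_implies_strict zero_neq_one)
  show "threshold f \<le> 1" using cInf_lower[OF \<open>1 \<in> A\<close> bdd] unfolding threshold_def A_def .
  show "f r = 1 \<longleftrightarrow> threshold f \<le> r" if "0 \<le> r" "r \<le> 1"
    using that cInf_lower[OF _ bdd, of r] above[of r] inf unfolding threshold_def A_def[symmetric]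
    by (cases "Inf A = r") (auto simp: A_def)
qed

lemma sublevel_set_cases:
  fixes u :: "real \<Rightarrow> real"
  assumes u: "mono u" "\<And>x. continuous (at_left x) u"
  obtains "\<And>x. y < u x" | "\<And>x. u x \<le> y" | c where "\<And>x. u x \<le> y \<longleftrightarrow> x \<le> c"
proof -
  define S where "S = {x. u x \<le> y}"
  have S_iff: "x \<in> S \<longleftrightarrow> u x \<le> y" for x by (simp add: S_def)
  have down: "x' \<in> S" if "x \<in> S" "x' \<le> x" for x x'
    using that monoD[OF u(1), of x' x] unfolding S_def by auto
  consider "S = {}" | "\<not> bdd_above S" | "S \<noteq> {}" "bdd_above S" by blast
  then show ?thesis
  proof cases
    case 1
    then have "y < u x" for x using S_iff[of x] by auto
    then show ?thesis by (rule that(1))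
  next
    case 2
    have "x \<in> S" for x
    proof -
      obtain s where "s \<in> S" "x < s" using 2 unfolding bdd_above_def by (meson not_le)
      then show ?thesis using down[of s x] by simp
    qed
    then show ?thesis using S_iff that(2) by blast
  next
    case 3
    have "u (Sup S) \<le> y"
      \<comment> \<open>left-continuity makes the sublevel set closed\<close>
    proof (rule tendsto_upperbound)
      show "(u \<longlongrightarrow> u (Sup S)) (at_left (Sup S))" using u(2)[of "Sup S"]
        by (simp add: continuous_within)
      show "\<forall>\<^sub>F z in at_left (Sup S). u z \<le> y"
      proof (unfold eventually_at_left_field, intro exI[of _ "Sup S - 1"] conjI allI impI)
        fix z assume "z < Sup S"
        then obtain s where "s \<in> S" "z < s" using less_cSup_iff[OF 3] by blast
        then show "u z \<le> y" using down[of s z] S_iff by simp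
      qed simp
    qed simp
    then have "Sup S \<in> S" by (simp add: S_iff)
    then have "u x \<le> y \<longleftrightarrow> x \<le> Sup S" for x
      using cSup_upper[OF _ 3(2)] down S_iff by blast
    then show ?thesis by (rule that(3))
  qed
qed

lemma real_distribution_interval_measure_cdfM:
  assumes "F \<in> cdfM"
  shows "real_distribution (interval_measure F)"
  by (rule real_distribution_interval_measure)
    (simp_all add: assms monoD[OF cdfM_D(1)[OF assms]] cdfM_D(2) cdfM_tendsto)

lemma measure_interval_measure_cdfM_atMost:
  assumes "F \<in> cdfM"
  shows "measure (interval_measure F) {..x} = F x"
  by (rule measure_interval_measure_Iic)
    (simp_all add: assms monoD[OF cdfM_D(1)[OF assms]] cdfM_D(2) cdfM_tendsto)

lemma Tu_eq_0:
  assumes "\<And>x. y < u x"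
  shows "Tu u F y = 0"
proof -
  have "{x. u x \<le> y} = {}" using assms by (auto simp: not_le[symmetric])
  then show ?thesis by (simp add: Tu_def)
qed

lemma Tu_eq_1:
  assumes "F \<in> cdfM" "\<And>x. u x \<le> y"
  shows "Tu u F y = 1"
proof -
  interpret real_distribution "interval_measure F"
    using real_distribution_interval_measure_cdfM[OF assms(1)] .
  show ?thesis using assms(2) prob_space by (simp add: Tu_def)
qed

lemma Tu_eq_atMost:
  assumes "F \<in> cdfM" "\<And>x. u x \<le> y \<longleftrightarrow> x \<le> c"
  shows "Tu u F y = F c"
  using measure_interval_measure_cdfM_atMost[OF assms(1)] assms(2) by (simp add: Tu_def atMost_def)

lemma Tu_distortion_comp:
  assumes f: "right_cont_distortion f" and F: "F \<in> cdfM"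
    and u: "mono u" "\<And>x. continuous (at_left x) u"
  shows "Tu u (\<lambda>x. f (F x)) = (\<lambda>y. f (Tu u F y))"
proof
  fix y
  from sublevel_set_cases[OF u, of y] show "Tu u (\<lambda>x. f (F x)) y = f (Tu u F y)"
  proof cases
    case 1
    then show ?thesis by (simp add: Tu_eq_0 right_cont_distortionD(1)[OF f])
  next
    case 2
    then show ?thesis
      by (simp add: Tu_eq_1 F distortion_comp_cdfM[OF f F] right_cont_distortionD(2)[OF f])
  next
    case (3 c)
    then show ?thesis by (simp add: Tu_eq_atMost[of _ u y c] F distortion_comp_cdfM[OF f F])
  qed
qed

lemma Tu_cdfM:
  assumes F: "F \<in> cdfM" and u: "mono u" "\<And>x. continuous (at_left x) u"
  shows "Tu u F \<in> cdfM"
proof -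
  let ?M = "interval_measure F"
  interpret M: real_distribution ?M using real_distribution_interval_measure_cdfM[OF F] .
  have u_measurable: "u \<in> borel_measurable ?M"
    using borel_measurable_mono[OF u(1)]
    by (simp add: measurable_cong_sets[OF sets_interval_measure refl])
  interpret N: real_distribution "distr ?M borel u"
    by (rule M.real_distribution_distr[OF u_measurable])
  have Tu_cdf: "Tu u F = cdf (distr ?M borel u)"
    by (rule ext) (simp add: cdf_def Tu_def measure_distr[OF u_measurable] vimage_def)
  obtain a b where ab: "\<forall>x<a. F x = 0" "\<forall>x\<ge>b. F x = 1" using cdfM_D(3)[OF F] by blast
  show ?thesis
  proof (rule cdfM_I[of _ "u a" "u b"])
    show "mono (Tu u F)" unfolding Tu_cdf by (intro monoI N.cdf_nondecreasing)
    show "continuous (at_right y) (Tu u F)" for y unfolding Tu_cdf by (rule N.cdf_is_right_cont)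
    show "Tu u F y = 0" if "y < u a" for y
      using sublevel_set_cases[OF u, of y]
    proof cases
      case (3 c)
      then have "c < a" using that by (meson not_le)
      then show ?thesis using ab(1) 3 by (simp add: Tu_eq_atMost[OF F])
    qed (metis Tu_eq_0 not_le that)+
    show "Tu u F y = 1" if "u b \<le> y" for y
      using sublevel_set_cases[OF u, of y]
    proof cases
      case (3 c)
      then have "b \<le> c" using that by blast
      then show ?thesis using ab(2) 3 by (simp add: Tu_eq_atMost[OF F])
    qed (metis Tu_eq_1[OF F] not_le that)+
  qed
qed

definition unit_homeo :: "(real \<Rightarrow> real) \<Rightarrow> bool" where
  "unit_homeo h \<longleftrightarrow> strict_mono_on {0..1} h \<and> continuous_on {0..1} h \<and> h 0 = 0 \<and> h 1 = 1"

lemma unit_homeo_iff: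
  "unit_homeo h \<longleftrightarrow> distortion h \<and> strict_mono_on {0..1} h \<and> continuous_on {0..1} h"
  unfolding unit_homeo_def distortion_def using strict_mono_on_imp_mono_on by blast

lemma unit_homeo_le_iff:
  "unit_homeo h \<Longrightarrow> x \<in> {0..1} \<Longrightarrow> y \<in> {0..1} \<Longrightarrow> h x \<le> h y \<longleftrightarrow> x \<le> y"
  unfolding unit_homeo_def using strict_mono_on_less_eq by blast

lemma unit_homeo_image:
  assumes h: "unit_homeo h"
  shows "h ` {0..1} = {0..1}"
proof
  show "h ` {0..1} \<subseteq> {0..1}"
    using unit_homeo_le_iff[OF h, of 0] unit_homeo_le_iff[OF h, of _ 1] h
    by (auto simp: unit_homeo_def)
  show "{0..1} \<subseteq> h ` {0..1}"
  proof
    fix y :: real assume "y \<in> {0..1}"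
    then have "\<exists>x\<ge>0. x \<le> 1 \<and> h x = y" using h unfolding unit_homeo_def by (intro IVT') auto
    then show "y \<in> h ` {0..1}" by force
  qed
qed

lemma unit_homeoI:
  assumes mono: "strict_mono_on {0..1} h" and onto: "h ` {0..1} = {0..1}"
  shows "unit_homeo h"
proof -
  have le_iff: "h x \<le> h y \<longleftrightarrow> x \<le> y" if "x \<in> {0..1}" "y \<in> {0..1}" for x y
    using strict_mono_on_less_eq[OF mono that] .
  have range: "h x \<in> {0..1}" if "x \<in> {0..1}" for x
    using imageI[OF that, of h] onto by simp
  have "0 \<in> h ` {0..1}" "1 \<in> h ` {0..1}" using onto by simp_all
  then obtain x0 x1 where "x0 \<in> {0..1}" "h x0 = 0" "x1 \<in> {0..1}" "h x1 = 1"
    by (elim imageE) metis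
  then have "h 0 = 0" "h 1 = 1" using le_iff[of 0 x0] le_iff[of x1 1] range[of 0] range[of 1]
    by auto
  moreover have "continuous_on {0..1} h"
    by (rule continuous_on_mono_onto_interval[OF _ strict_mono_on_imp_mono_on[OF mono] onto]) simp
  ultimately show ?thesis using mono unfolding unit_homeo_def by simp
qed

lemma unit_homeo_inv:
  assumes h: "unit_homeo h"
  shows "unit_homeo (inv_into {0..1} h)"
proof (rule unit_homeoI)
  have "bij_betw h {0..1} {0..1}"
    using h unit_homeo_image[OF h]
    by (auto simp: bij_betw_def unit_homeo_def strict_mono_on_imp_inj_on)
  then have inv: "bij_betw (inv_into {0..1} h) {0..1} {0..1}" by (rule bij_betw_inv_into)
  then show "inv_into {0..1} h ` {0..1} = {0..1}" by (simp add: bij_betw_def)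
  show "strict_mono_on {0..1} (inv_into {0..1} h)"
  proof (rule strict_mono_onI)
    fix r s :: real assume rs: "r \<in> {0..1}" "s \<in> {0..1}" "r < s"
    have "inv_into {0..1} h r \<in> {0..1}" "inv_into {0..1} h s \<in> {0..1}"
      using inv rs by (auto simp: bij_betw_def)
    then show "inv_into {0..1} h r < inv_into {0..1} h s"
      using unit_homeo_le_iff[OF h] rs unit_homeo_image[OF h] f_inv_into_f[of _ h "{0..1}"]
      by (metis not_le)
  qed
qed

lemma unit_homeo_right_cont_distortion:
  assumes h: "unit_homeo h"
  shows "right_cont_distortion h"
proof (rule right_cont_distortionI)
  show "h r \<le> h r'" if "0 \<le> r" "r \<le> r'" "r' \<le> 1" for r r'
    using that unit_homeo_le_iff[OF h, of r r'] by simp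
  show "h 0 = 0" "h 1 = 1" using h by (simp_all add: unit_homeo_def)
  show "continuous (at_right r) h" if "0 \<le> r" "r < 1" for r
  proof -
    have "continuous (at r within {0..1}) h"
      using h that by (simp add: unit_homeo_def continuous_on_eq_continuous_within)
    then have "continuous (at r within {r..1}) h"
      by (rule continuous_within_subset) (use that in auto)
    then show ?thesis using that by (simp add: at_within_Icc_at_right)
  qed
qed

lemma right_cont_distortion_comp_unit_homeo:
  assumes f: "right_cont_distortion f" and h: "unit_homeo h"
  shows "right_cont_distortion (\<lambda>x. f (h x))"
proof (rule right_cont_distortionI)
  note h_rcd = unit_homeo_right_cont_distortion[OF h]
  show "f (h r) \<le> f (h r')" if "0 \<le> r" "r \<le> r'" "r' \<le> 1" for r r'
    using that right_cont_distortionD(3)[OF f] right_cont_distortionD(3)[OF h_rcd]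
      right_cont_distortion_range[OF h_rcd] by simp
  show "f (h 0) = 0" "f (h 1) = 1" using f h_rcd by (simp_all add: right_cont_distortionD)
  show "continuous (at_right r) (\<lambda>x. f (h x))" if r: "0 \<le> r" "r < 1" for r
  proof (rule continuous_at_right_distortion_comp[OF f])
    show "continuous (at_right r) h" "0 \<le> h r"
      using r right_cont_distortionD(4)[OF h_rcd] right_cont_distortion_range[OF h_rcd] by simp_all
    show "\<forall>\<^sub>F y in at_right r. h y \<in> {h r..1}"
      unfolding eventually_at_right_field using r right_cont_distortionD(3)[OF h_rcd]
        right_cont_distortion_range[OF h_rcd] by (intro exI[of _ 1]) auto
  qed
qed

lemma unit_homeo_comp_right_cont_distortion:
  assumes g: "unit_homeo g" and f: "right_cont_distortion f"
  shows "right_cont_distortion (\<lambda>x. g (f x))"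
proof (rule right_cont_distortionI)
  show "g (f r) \<le> g (f r')" if "0 \<le> r" "r \<le> r'" "r' \<le> 1" for r r'
    using that right_cont_distortionD(3)[OF f] right_cont_distortion_range[OF f]
      unit_homeo_le_iff[OF g] by simp
  show "g (f 0) = 0" "g (f 1) = 1" using f g
    by (simp_all add: right_cont_distortionD unit_homeo_def)
  show "continuous (at_right r) (\<lambda>x. g (f x))" if r: "0 \<le> r" "r < 1" for r
  proof -
    have "continuous (at (f r) within {0..1}) g"
      using g right_cont_distortion_range[OF f] r
      by (simp add: unit_homeo_def continuous_on_eq_continuous_within)
    moreover have "\<forall>\<^sub>F y in at_right r. f y \<in> {0..1}"
      unfolding eventually_at_right_field using r right_cont_distortion_range[OF f]
      by (intro exI[of _ 1]) auto
    moreover have "(f \<longlongrightarrow> f r) (at_right r)"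
      using right_cont_distortionD(4)[OF f r] by (simp add: continuous_within)
    ultimately have "((\<lambda>x. g (f x)) \<longlongrightarrow> g (f r)) (at_right r)"
      by (rule continuous_within_tendsto_compose)
    then show ?thesis by (simp add: continuous_within)
  qed
qed

lemma commutes_DR_if_representation:
  assumes u: "mono u" "\<And>x. continuous (at_left x) u" and d: "unit_homeo d"
    and T: "\<And>F. F \<in> cdfM \<Longrightarrow> T F = Td d (Tu u F)"
  shows "commutes_DR T"
proof -
  define d' where "d' = inv_into {0..1} d"
  have d_rcd: "right_cont_distortion d" by (rule unit_homeo_right_cont_distortion[OF d])
  have "inj_on d {0..1}" using d by (simp add: unit_homeo_def strict_mono_on_imp_inj_on)
  then have d'_d: "d' (d r) = r" and d_d': "d (d' r) = r" if "r \<in> {0..1}" for r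
    using that unit_homeo_image[OF d] by (simp_all add: d'_def f_inv_into_f)
  have d_range: "d r \<in> {0..1}" if "r \<in> {0..1}" for r
    using that unit_homeo_image[OF d] by blast
  have Tu_range: "Tu u F y \<in> {0..1}" if "F \<in> cdfM" for F y
    using cdfM_range[OF Tu_cdfM[OF that u]] by simp
  have T_eq: "T F = (\<lambda>y. d (Tu u F y))" if "F \<in> cdfM" for F
    using T[OF that] Td_eq_comp[OF d_rcd Tu_cdfM[OF that u]] by simp
  have T_Td: "T (Td e F) = (\<lambda>y. d (e (Tu u F y)))"
    if e: "right_cont_distortion e" and F: "F \<in> cdfM" for e F
    by (simp add: Td_eq_comp[OF e F] T_eq[OF distortion_comp_cdfM[OF e F]]
        Tu_distortion_comp[OF e F u])
  have Td_T: "Td e (T F) = (\<lambda>y. e (d (Tu u F y)))"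
    if e: "right_cont_distortion e" and F: "F \<in> cdfM" for e F
    using Td_eq_comp[OF e distortion_comp_cdfM[OF d_rcd Tu_cdfM[OF F u]]] by (simp add: T_eq[OF F])
  show ?thesis unfolding commutes_DR_def
  proof (intro conjI allI impI)
    fix e assume e: "right_cont_distortion e"
    have e_range: "e r \<in> {0..1}" if "r \<in> {0..1}" for r
      using right_cont_distortion_range[OF e] that by simp
    show "\<exists>e'. right_cont_distortion e' \<and> (\<forall>F\<in>cdfM. Td e (T F) = T (Td e' F))"
    proof (intro exI conjI ballI)
      show "right_cont_distortion (\<lambda>x. d' (e (d x)))"
        unfolding d'_def using unit_homeo_inv[OF d] right_cont_distortion_comp_unit_homeo[OF e d]
        by (rule unit_homeo_comp_right_cont_distortion)
      fix F assume F: "F \<in> cdfM"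
      show "Td e (T F) = T (Td (\<lambda>x. d' (e (d x))) F)"
        unfolding Td_T[OF e F] T_Td[OF \<open>right_cont_distortion (\<lambda>x. d' (e (d x)))\<close> F]
        using d_d' e_range d_range Tu_range[OF F] by simp
    qed
    show "\<exists>e'. right_cont_distortion e' \<and> (\<forall>F\<in>cdfM. T (Td e F) = Td e' (T F))"
    proof (intro exI conjI ballI)
      show "right_cont_distortion (\<lambda>x. d (e (d' x)))"
        unfolding d'_def using d right_cont_distortion_comp_unit_homeo[OF e unit_homeo_inv[OF d]]
        by (rule unit_homeo_comp_right_cont_distortion)
      fix F assume F: "F \<in> cdfM"
      show "T (Td e F) = Td (\<lambda>x. d (e (d' x))) (T F)"
        unfolding T_Td[OF e F] Td_T[OF \<open>right_cont_distortion (\<lambda>x. d (e (d' x)))\<close> F]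
        using d'_d Tu_range[OF F] by simp
    qed
  qed
qed

lemma Td_fixes_unit_step:
  assumes "right_cont_distortion e"
  shows "Td e (unit_step c) = unit_step c"
  using Td_eq_comp[OF assms unit_step_cdfM] right_cont_distortionD(1,2)[OF assms]
  by (auto simp: unit_step_def)

lemma st_le_unit_step: "x \<le> y \<Longrightarrow> st_le (unit_step x) (unit_step y)"
  unfolding st_le_def unit_step_def by auto

lemma cdfM_between_unit_steps:
  assumes "F \<in> cdfM"
  obtains a b where "st_le (unit_step a) F" "st_le F (unit_step b)"
proof -
  obtain a b where ab: "\<forall>x<a. F x = 0" "\<forall>x\<ge>b. F x = 1" using cdfM_D(3)[OF assms] by blast
  have "st_le (unit_step a) F" "st_le F (unit_step b)"
    using ab cdfM_range[OF assms] unfolding st_le_def unit_step_def by (auto simp: not_le)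
  then show ?thesis by (rule that)
qed

lemma Tu_const:
  assumes "F \<in> cdfM"
  shows "Tu (\<lambda>_. c) F = unit_step c"
proof
  fix y
  show "Tu (\<lambda>_. c) F y = unit_step c y"
    using Tu_eq_0[of y "\<lambda>_. c" F] Tu_eq_1[OF assms, of "\<lambda>_. c" y]
    by (cases "c \<le> y") (simp_all add: unit_step_def)
qed

lemma unit_interval_eqI:
  fixes p q :: real
  assumes "p \<in> {0..1}" "q \<in> {0..1}" and "\<And>t. 0 < t \<Longrightarrow> t \<le> 1 \<Longrightarrow> t \<le> p \<longleftrightarrow> t \<le> q"
  shows "p = q"
proof (rule ccontr)
  assume "p \<noteq> q"
  then have "0 < max p q" "max p q \<le> 1" using assms(1,2) by auto
  from assms(3)[OF this] show False using \<open>p \<noteq> q\<close> by (auto simp: max_def split: if_splits)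
qed

locale commuting_operator =
  fixes T :: "(real \<Rightarrow> real) \<Rightarrow> real \<Rightarrow> real"
  assumes T_cdfM: "F \<in> cdfM \<Longrightarrow> T F \<in> cdfM"
    and T_monotone: "monotoneT T"
    and T_commutes: "commutes_DR T"
begin

definition u :: "real \<Rightarrow> real" where
  "u x = quantile (T (unit_step x)) 1"

definition pre_distortion :: "real \<Rightarrow> real \<Rightarrow> real" where
  "pre_distortion t =
    (SOME e. right_cont_distortion e \<and> (\<forall>F\<in>cdfM. Td (unit_step t) (T F) = T (Td e F)))"

definition post_distortion :: "real \<Rightarrow> real \<Rightarrow> real" where
  "post_distortion s =
    (SOME e. right_cont_distortion e \<and> (\<forall>F\<in>cdfM. T (Td (unit_step s) F) = Td e (T F)))"

definition sigma :: "real \<Rightarrow> real" where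
  "sigma t = threshold (pre_distortion t)"

definition tau :: "real \<Rightarrow> real" where
  "tau s = threshold (post_distortion s)"

lemma pre_distortion:
  assumes "0 < t" "t \<le> 1"
  shows "right_cont_distortion (pre_distortion t)"
    and "F \<in> cdfM \<Longrightarrow> Td (unit_step t) (T F) = T (Td (pre_distortion t) F)"
proof -
  have "\<exists>e. right_cont_distortion e \<and> (\<forall>F\<in>cdfM. Td (unit_step t) (T F) = T (Td e F))"
    using T_commutes unit_step_right_cont_distortion[OF assms] unfolding commutes_DR_def by blast
  from someI_ex[OF this] show "right_cont_distortion (pre_distortion t)"
    "F \<in> cdfM \<Longrightarrow> Td (unit_step t) (T F) = T (Td (pre_distortion t) F)"
    unfolding pre_distortion_def by blast+
qed

lemma post_distortion:
  assumes "0 < s" "s \<le> 1"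
  shows "right_cont_distortion (post_distortion s)"
    and "F \<in> cdfM \<Longrightarrow> T (Td (unit_step s) F) = Td (post_distortion s) (T F)"
proof -
  have "\<exists>e. right_cont_distortion e \<and> (\<forall>F\<in>cdfM. T (Td (unit_step s) F) = Td e (T F))"
    using T_commutes unit_step_right_cont_distortion[OF assms] unfolding commutes_DR_def by blast
  from someI_ex[OF this] show "right_cont_distortion (post_distortion s)"
    "F \<in> cdfM \<Longrightarrow> T (Td (unit_step s) F) = Td (post_distortion s) (T F)"
    unfolding post_distortion_def by blast+
qed

lemma sigma_range: "0 < t \<Longrightarrow> t \<le> 1 \<Longrightarrow> 0 < sigma t \<and> sigma t \<le> 1"
  unfolding sigma_def using threshold(1,2)[OF pre_distortion(1)] by blast

lemma tau_range: "0 < s \<Longrightarrow> s \<le> 1 \<Longrightarrow> 0 < tau s \<and> tau s \<le> 1"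
  unfolding tau_def using threshold(1,2)[OF post_distortion(1)] by blast

lemma T_unit_step: "T (unit_step x) = unit_step (u x)"
proof -
  have "T (unit_step x) = T (Td (pre_distortion 1) (unit_step x))"
    using Td_fixes_unit_step[OF pre_distortion(1)] by simp
  also have "\<dots> = Td (unit_step 1) (T (unit_step x))" using pre_distortion(2) unit_step_cdfM by simp
  also have "\<dots> = unit_step (u x)"
    unfolding u_def by (rule Td_unit_step[OF T_cdfM[OF unit_step_cdfM]]) simp_all
  finally show ?thesis .
qed

lemma u_mono: "mono u"
proof
  fix x y :: real assume "x \<le> y"
  then have "st_le (T (unit_step x)) (T (unit_step y))"
    using T_monotone st_le_unit_step unit_step_cdfM unfolding monotoneT_def by blast
  then have "unit_step (u y) (u y) \<le> unit_step (u x) (u y)" unfolding T_unit_step st_le_def by blast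
  then show "u x \<le> u y" by (simp add: unit_step_def split: if_splits)
qed

lemma tau_le_T_iff:
  assumes s: "0 < s" "s \<le> 1" and F: "F \<in> cdfM"
  shows "tau s \<le> T F y \<longleftrightarrow> u (quantile F s) \<le> y"
proof -
  have "unit_step (u (quantile F s)) = (\<lambda>y. post_distortion s (T F y))"
    using post_distortion(2)[OF s F]
    unfolding Td_unit_step[OF F s] T_unit_step
      Td_eq_comp[OF post_distortion(1)[OF s] T_cdfM[OF F]] .
  then have "post_distortion s (T F y) = unit_step (u (quantile F s)) y" by simp
  then have "post_distortion s (T F y) = 1 \<longleftrightarrow> u (quantile F s) \<le> y" by (simp add: unit_step_def)
  moreover have "post_distortion s (T F y) = 1 \<longleftrightarrow> tau s \<le> T F y"
    unfolding tau_def using threshold(3)[OF post_distortion(1)[OF s]] cdfM_range[OF T_cdfM[OF F]]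
    by blast
  ultimately show ?thesis by simp
qed

lemma T_const_if_u_const:
  assumes u_const: "\<And>x. u x = c" and F: "F \<in> cdfM"
  shows "T F = unit_step c"
proof -
  obtain a b where "st_le (unit_step a) F" "st_le F (unit_step b)"
    using cdfM_between_unit_steps[OF F] .
  then have "st_le (T (unit_step a)) (T F)" "st_le (T F) (T (unit_step b))"
    using T_monotone F unit_step_cdfM unfolding monotoneT_def by blast+
  then show ?thesis unfolding T_unit_step u_const st_le_def by (auto intro!: ext order.antisym)
qed

end

locale nondegenerate_commuting_operator = commuting_operator +
  fixes a b :: real
  assumes a_less_b: "a < b" and u_a_less_u_b: "u a < u b"
begin

lemma two_point_ab_cdfM: "0 \<le> r \<Longrightarrow> r \<le> 1 \<Longrightarrow> two_point_cdf a b r \<in> cdfM"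
  using two_point_cdfM a_less_b by simp

lemma u_quantile_two_point:
  assumes "0 \<le> r" "r \<le> 1" "0 < s" "s \<le> 1"
  shows "u (quantile (two_point_cdf a b r) s) = (if s \<le> r then u a else u b)"
  using quantile_two_point[OF less_imp_le[OF a_less_b] assms] by simp

lemma T_two_point_neq_unit_step:
  assumes r: "0 < r" "r < 1"
  shows "T (two_point_cdf a b r) \<noteq> unit_step q"
proof
  assume eq: "T (two_point_cdf a b r) = unit_step q"
  have "u (quantile (two_point_cdf a b r) s) = q" if s: "0 < s" "s \<le> 1" for s
  proof -
    have "u (quantile (two_point_cdf a b r) s) \<le> y \<longleftrightarrow> q \<le> y" for y
      using tau_le_T_iff[OF s two_point_ab_cdfM, of r y] tau_range[OF s] r
      by (auto simp: eq unit_step_def split: if_splits)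
    then show ?thesis by (metis order.antisym order.refl)
  qed
  from this[of r] this[of 1] show False
    using u_quantile_two_point[of r r] u_quantile_two_point[of r 1] r u_a_less_u_b by simp
qed

lemma pre_distortion_eq_unit_step:
  assumes t: "0 < t" "t \<le> 1" and r: "0 \<le> r" "r \<le> 1"
  shows "pre_distortion t r = unit_step (sigma t) r"
proof -
  note e = pre_distortion[OF t]
  have "pre_distortion t r = 0 \<or> pre_distortion t r = 1"
  proof (rule ccontr)
    assume "\<not> (pre_distortion t r = 0 \<or> pre_distortion t r = 1)"
    then have \<rho>: "0 < pre_distortion t r" "pre_distortion t r < 1" and r': "0 < r" "r < 1"
      using right_cont_distortion_range[OF e(1) r] right_cont_distortionD(1,2)[OF e(1)] r
      by (auto simp: less_le)
    \<comment> \<open>the distortion moves the inner atom of a two-point law, so T would map a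
      genuine two-point law to a Dirac\<close>
    have "Td (pre_distortion t) (two_point_cdf a b r) = two_point_cdf a b (pre_distortion t r)"
      using Td_eq_comp[OF e(1) two_point_ab_cdfM[OF r]] right_cont_distortionD(1,2)[OF e(1)]
      by (auto simp: two_point_cdf_def)
    then have "T (two_point_cdf a b (pre_distortion t r)) =
        Td (unit_step t) (T (two_point_cdf a b r))"
      using e(2)[OF two_point_ab_cdfM[OF r]] by simp
    also have "\<dots> = unit_step (quantile (T (two_point_cdf a b r)) t)"
      by (rule Td_unit_step[OF T_cdfM[OF two_point_ab_cdfM[OF r]] t])
    finally show False using T_two_point_neq_unit_step[OF \<rho>] by blast
  qed
  then show ?thesis
    using threshold(3)[OF e(1) r] unfolding sigma_def unit_step_def by auto
qed

lemma le_T_iff_sigma: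
  assumes t: "0 < t" "t \<le> 1" and F: "F \<in> cdfM"
  shows "t \<le> T F y \<longleftrightarrow> u (quantile F (sigma t)) \<le> y"
proof -
  have "Td (pre_distortion t) F = (\<lambda>z. unit_step (sigma t) (F z))"
    using Td_eq_comp[OF pre_distortion(1)[OF t] F] pre_distortion_eq_unit_step[OF t]
      cdfM_range[OF F]
      by simp
  also have "\<dots> = unit_step (quantile F (sigma t))"
    using unit_step_comp_cdfM[OF F] sigma_range[OF t] by simp
  finally have "unit_step (quantile (T F) t) = unit_step (u (quantile F (sigma t)))"
    using pre_distortion(2)[OF t F] by (simp add: Td_unit_step[OF T_cdfM[OF F] t] T_unit_step)
  then show ?thesis using quantile_le_iff[OF T_cdfM[OF F] t] by (simp add: unit_step_inject)
qed

lemma sigma_tau: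
  assumes s: "0 < s" "s \<le> 1"
  shows "sigma (tau s) = s"
proof (rule ccontr)
  define s' where "s' = sigma (tau s)"
  assume "sigma (tau s) \<noteq> s"
  then have "s' \<noteq> s" by (simp add: s'_def)
  have ts: "0 < tau s" "tau s \<le> 1" using tau_range[OF s] by auto
  have s': "0 < s'" "s' \<le> 1" using sigma_range[OF ts] unfolding s'_def by auto
  define F where "F = two_point_cdf a b (min s s')"
  have F: "F \<in> cdfM" using two_point_ab_cdfM s s' by (simp add: F_def)
  have "u (quantile F s) \<le> y \<longleftrightarrow> u (quantile F s') \<le> y" for y
    using tau_le_T_iff[OF s F, of y] le_T_iff_sigma[OF ts F, of y] by (simp add: s'_def)
  then have "u (quantile F s) = u (quantile F s')" by (metis order.antisym order.refl)
  then show False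
    using u_quantile_two_point[of "min s s'" s] u_quantile_two_point[of "min s s'" s'] s s'
      \<open>s' \<noteq> s\<close> u_a_less_u_b by (auto simp: F_def min_def split: if_splits)
qed


lemma sigma_mono:
  assumes t: "0 < t" "t \<le> t'" "t' \<le> 1"
  shows "sigma t \<le> sigma t'"
proof (rule ccontr)
  assume "\<not> sigma t \<le> sigma t'"
  define r where "r = sigma t'"
  have t': "0 < t'" "t' \<le> 1" and t1: "t \<le> 1" using t by auto
  have r: "0 \<le> r" "r \<le> 1" "r < sigma t" using sigma_range[OF t'] \<open>\<not> sigma t \<le> sigma t'\<close>
    unfolding r_def by auto
  have "t' \<le> T (two_point_cdf a b r) (u a)"
    using le_T_iff_sigma[OF t' two_point_ab_cdfM[OF r(1,2)]] u_quantile_two_point[OF r(1,2)]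
      sigma_range[OF t'] unfolding r_def by simp
  then have "t \<le> T (two_point_cdf a b r) (u a)" using t(2) by linarith
  then have "u (quantile (two_point_cdf a b r) (sigma t)) \<le> u a"
    using le_T_iff_sigma[OF t(1) t1 two_point_ab_cdfM[OF r(1,2)]] by blast
  then show False
    using u_quantile_two_point[OF r(1,2)] sigma_range[OF t(1) t1] r(3) u_a_less_u_b by simp
qed

lemma tau_strict_mono:
  assumes s: "0 < s" "s < s'" "s' \<le> 1"
  shows "tau s < tau s'"
proof (rule ccontr)
  assume "\<not> tau s < tau s'"
  then have "sigma (tau s') \<le> sigma (tau s)"
    using tau_range[of s] tau_range[of s'] s by (intro sigma_mono) auto
  then show False using sigma_tau[of s] sigma_tau[of s'] s by simp
qed

lemma sigma_inj:
  assumes t: "0 < t" "t < t'" "t' \<le> 1"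
  shows "sigma t \<noteq> sigma t'"
proof
  assume eq: "sigma t = sigma t'"
  have same_levels: "t \<le> T F y \<longleftrightarrow> t' \<le> T F y" if "F \<in> cdfM" for F y
    using that le_T_iff_sigma[of t F y] le_T_iff_sigma[of t' F y] eq t by simp
  \<comment> \<open>a distortion sending the value of T F0 at u a to t separates the levels t and t'\<close>
  define c c' where "c = tau (1/2)" and "c' = tau 1"
  have c: "0 < c" "c < c'" "c' \<le> 1"
    using tau_range[of "1/2"] tau_strict_mono[of "1/2" 1] tau_range[of 1] unfolding c_def c'_def
    by auto
  have e'_rcd: "right_cont_distortion (two_point_cdf c c' t)"
    using c t by (intro two_point_right_cont_distortion) auto
  obtain e where e: "right_cont_distortion e"
    "\<And>F. F \<in> cdfM \<Longrightarrow> Td (two_point_cdf c c' t) (T F) = T (Td e F)"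
    using T_commutes e'_rcd unfolding commutes_DR_def by blast
  define F0 where "F0 = two_point_cdf a b (1/2)"
  have F0: "F0 \<in> cdfM" unfolding F0_def by (rule two_point_ab_cdfM) auto
  have "c \<le> T F0 (u a)" "\<not> c' \<le> T F0 (u a)"
    using tau_le_T_iff[of "1/2" F0 "u a"] tau_le_T_iff[of 1 F0 "u a"] F0
      u_quantile_two_point[of "1/2" "1/2"] u_quantile_two_point[of "1/2" 1] u_a_less_u_b
    unfolding c_def c'_def F0_def by simp_all
  then have "T (Td e F0) (u a) = t"
    using e(2)[OF F0] Td_eq_comp[OF e'_rcd T_cdfM[OF F0]] by (simp add: two_point_cdf_def)
  then show False using same_levels[OF Td_cdfM[OF e(1) F0], of "u a"] t by simp
qed

lemma sigma_strict_mono: "0 < t \<Longrightarrow> t < t' \<Longrightarrow> t' \<le> 1 \<Longrightarrow> sigma t < sigma t'"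
  using sigma_mono[of t t'] sigma_inj[of t t'] by simp

lemma tau_sigma:
  assumes t: "0 < t" "t \<le> 1"
  shows "tau (sigma t) = t"
proof -
  have st: "0 < sigma t" "sigma t \<le> 1" using sigma_range[OF t] by auto
  have ts: "0 < tau (sigma t)" "tau (sigma t) \<le> 1" using tau_range[OF st] by auto
  show ?thesis
    using sigma_strict_mono[OF ts(1) _ t(2)] sigma_strict_mono[OF t(1) _ ts(2)] sigma_tau[OF st]
    by (metis linorder_neqE_linordered_idom order.irrefl)
qed

lemma sigma_1: "sigma 1 = 1"
proof -
  have "sigma (tau 1) \<le> sigma 1" "sigma 1 \<le> 1"
    using tau_range[of 1] sigma_range[of 1] by (auto intro: sigma_mono)
  then show ?thesis using sigma_tau[of 1] by simp
qed

definition tau_ext :: "real \<Rightarrow> real" where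
  "tau_ext v = (if v \<le> 0 then 0 else tau v)"

lemma unit_homeo_tau_ext: "unit_homeo tau_ext"
proof (rule unit_homeoI)
  show "strict_mono_on {0..1} tau_ext"
    by (rule strict_mono_onI) (auto simp: tau_ext_def tau_range tau_strict_mono)
  show "tau_ext ` {0..1} = {0..1}"
  proof
    show "tau_ext ` {0..1} \<subseteq> {0..1}" using tau_range by (auto simp: tau_ext_def less_imp_le)
    show "{0..1} \<subseteq> tau_ext ` {0..1}"
    proof
      fix v :: real assume v: "v \<in> {0..1}"
      show "v \<in> tau_ext ` {0..1}"
      proof (cases "v = 0")
        case True
        then show ?thesis by (force simp: tau_ext_def)
      next
        case False
        then have "v = tau_ext (sigma v)" "sigma v \<in> {0..1}"
          using v sigma_range[of v] tau_sigma[of v] by (auto simp: tau_ext_def)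
        then show ?thesis by blast
      qed
    qed
  qed
qed

lemma sigma_le_iff:
  assumes t: "0 < t" "t \<le> 1" and v: "0 \<le> v" "v \<le> 1"
  shows "sigma t \<le> v \<longleftrightarrow> t \<le> tau_ext v"
proof (cases "v = 0")
  case True
  then show ?thesis using sigma_range[OF t] t by (simp add: tau_ext_def)
next
  case False
  then have v0: "0 < v" using v by simp
  have "sigma t \<le> v \<longleftrightarrow> sigma t \<le> sigma (tau v)" using sigma_tau[OF v0 v(2)] by simp
  also have "\<dots> \<longleftrightarrow> t \<le> tau v"
  proof (cases t "tau v" rule: linorder_cases)
    case less
    then show ?thesis using sigma_strict_mono[OF t(1) less] tau_range[OF v0 v(2)] by simp
  next
    case greater
    then show ?thesis using sigma_strict_mono[OF _ greater t(2)] tau_range[OF v0 v(2)] by simp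
  qed simp
  finally show ?thesis using v0 by (simp add: tau_ext_def)
qed

lemma u_continuous_at_left: "continuous (at_left x) u"
  unfolding continuous_within
proof (rule order_tendstoI)
  fix c assume "u x < c"
  show "\<forall>\<^sub>F y in at_left x. u y < c"
  proof (unfold eventually_at_left_field, intro exI[of _ "x - 1"] conjI allI impI)
    fix y assume "y < x"
    then show "u y < c" using monoD[OF u_mono, of y x] \<open>u x < c\<close> by simp
  qed simp
next
  fix c assume c: "c < u x"
  have "\<exists>z<x. c < u z"
  proof (rule ccontr)
    assume "\<not> (\<exists>z<x. c < u z)"
    then have below: "u z \<le> c" if "z < x" for z using that not_le by blast
    \<comment> \<open>all quantiles of the uniform law on [x - 1, x] below level 1 lie left of x\<close>
    have levels: "t \<le> T (uniform_cdf x) c" if t: "0 < t" "t < 1" for t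
    proof -
      have "0 < sigma t" "sigma t < 1"
        using sigma_range[of t] sigma_strict_mono[of t 1] sigma_1 t by simp_all
      then have "u (quantile (uniform_cdf x) (sigma t)) \<le> c"
        by (intro below) (simp add: quantile_uniform)
      then show ?thesis using le_T_iff_sigma[of t "uniform_cdf x" c] uniform_cdfM t by simp
    qed
    have "1 \<le> T (uniform_cdf x) c" by (rule dense_le_bounded[of 0 1, OF _ levels]) simp_all
    then have "u (quantile (uniform_cdf x) (sigma 1)) \<le> c"
      using le_T_iff_sigma[of 1 "uniform_cdf x" c] uniform_cdfM by simp
    then show False using c sigma_1 quantile_uniform[of 1 x] by simp
  qed
  then obtain z where "z < x" "c < u z" by blast
  then show "\<forall>\<^sub>F y in at_left x. c < u y"
  proof (unfold eventually_at_left_field, intro exI[of _ z] conjI allI impI)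
    fix y assume "z < y"
    then show "c < u y" using monoD[OF u_mono, of z y] \<open>c < u z\<close> by simp
  qed
qed

lemma T_eq_tau_ext_Tu:
  assumes F: "F \<in> cdfM"
  shows "T F y = tau_ext (Tu u F y)"
proof -
  have TF: "0 \<le> T F y" "T F y \<le> 1" using cdfM_range[OF T_cdfM[OF F]] by auto
  from sublevel_set_cases[OF u_mono u_continuous_at_left, of y] show ?thesis
  proof cases
    case 1
    have "\<not> 0 < T F y"
      using le_T_iff_sigma[OF _ TF(2) F, of y] 1 by (auto simp: not_le[symmetric])
    then show ?thesis using TF Tu_eq_0[OF 1] by (simp add: tau_ext_def)
  next
    case 2
    then have "1 \<le> T F y" using le_T_iff_sigma[of 1 F y] F by simp
    then show ?thesis using TF Tu_eq_1[OF F 2] tau_sigma[of 1] sigma_1 by (simp add: tau_ext_def)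
  next
    case (3 c)
    have Fc: "F c \<in> {0..1}" using cdfM_range[OF F] by simp
    have "T F y = tau_ext (F c)"
    proof (rule unit_interval_eqI)
      show "T F y \<in> {0..1}" using TF by simp
      show "tau_ext (F c) \<in> {0..1}" using unit_homeo_image[OF unit_homeo_tau_ext] Fc by blast
      fix t :: real assume t: "0 < t" "t \<le> 1"
      have "t \<le> T F y \<longleftrightarrow> u (quantile F (sigma t)) \<le> y" by (rule le_T_iff_sigma[OF t F])
      also have "\<dots> \<longleftrightarrow> quantile F (sigma t) \<le> c" by (rule 3)
      also have "\<dots> \<longleftrightarrow> sigma t \<le> F c" using quantile_le_iff[OF F] sigma_range[OF t] by simp
      also have "\<dots> \<longleftrightarrow> t \<le> tau_ext (F c)" using sigma_le_iff[OF t] Fc by simp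
      finally show "t \<le> T F y \<longleftrightarrow> t \<le> tau_ext (F c)" .
    qed
    then show ?thesis using Tu_eq_atMost[OF F 3] by simp
  qed
qed

lemma representation_nondegenerate:
  "\<exists>u d. mono u \<and> (\<forall>x. continuous (at_left x) u) \<and> unit_homeo d \<and> (\<forall>F\<in>cdfM. T F = Td d (Tu u F))"
proof (intro exI conjI allI ballI)
  fix F assume F: "F \<in> cdfM"
  show "T F = Td tau_ext (Tu u F)"
    using Td_eq_comp[OF unit_homeo_right_cont_distortion[OF unit_homeo_tau_ext]
        Tu_cdfM[OF F u_mono u_continuous_at_left]] T_eq_tau_ext_Tu[OF F] by auto
qed (rule u_mono u_continuous_at_left unit_homeo_tau_ext)+

end

context commuting_operator
begin

lemma representation:
  "\<exists>u d. mono u \<and> (\<forall>x. continuous (at_left x) u) \<and> unit_homeo d \<and> (\<forall>F\<in>cdfM. T F = Td d (Tu u F))"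
proof (cases "\<exists>a b. a < b \<and> u a < u b")
  case True
  then obtain a b where "a < b" "u a < u b" by blast
  then interpret nondegenerate_commuting_operator T a b by unfold_locales
  show ?thesis by (rule representation_nondegenerate)
next
  case False
  have u_const: "u x = u 0" for x
  proof (cases x "0::real" rule: linorder_cases)
    case less
    then show ?thesis using False monoD[OF u_mono, of x 0] by force
  next
    case greater
    then show ?thesis using False monoD[OF u_mono, of 0 x] by force
  qed simp
  show ?thesis
  proof (intro exI conjI allI ballI)
    show "unit_homeo (\<lambda>x. x)" by (rule unit_homeoI) (auto simp: strict_mono_on_def)
    fix F assume "F \<in> cdfM"
    then show "T F = Td (\<lambda>x. x) (Tu (\<lambda>_. u 0) F)"
      using T_const_if_u_const[OF u_const] Tu_const
        Td_fixes_unit_step[OF unit_homeo_right_cont_distortion[OF \<open>unit_homeo (\<lambda>x. x)\<close>]] by simp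
  qed (simp_all add: mono_def)
qed

end

theorem theorem4:
  fixes T :: "(real \<Rightarrow> real) \<Rightarrow> (real \<Rightarrow> real)"
  assumes "\<forall>F\<in>cdfM. T F \<in> cdfM"
    and "monotoneT T"
  shows "commutes_DR T \<longleftrightarrow>
    (\<exists>u d. mono u \<and> (\<forall>x. continuous (at_left x) u) \<and>
       distortion d \<and> strict_mono_on {0..1} d \<and> continuous_on {0..1} d \<and>
       (\<forall>F\<in>cdfM. T F = Td d (Tu u F)))"
proof
  assume "commutes_DR T"
  then interpret commuting_operator T using assms by unfold_locales blast+
  show "\<exists>u d. mono u \<and> (\<forall>x. continuous (at_left x) u) \<and>
       distortion d \<and> strict_mono_on {0..1} d \<and> continuous_on {0..1} d \<and>
       (\<forall>F\<in>cdfM. T F = Td d (Tu u F))"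
    using representation unfolding unit_homeo_iff by blast
next
  assume "\<exists>u d. mono u \<and> (\<forall>x. continuous (at_left x) u) \<and>
       distortion d \<and> strict_mono_on {0..1} d \<and> continuous_on {0..1} d \<and>
       (\<forall>F\<in>cdfM. T F = Td d (Tu u F))"
  then obtain u d where "mono u" "\<forall>x. continuous (at_left x) u" "unit_homeo d"
    "\<forall>F\<in>cdfM. T F = Td d (Tu u F)"
    unfolding unit_homeo_iff by blast
  then show "commutes_DR T" by (intro commutes_DR_if_representation) simp_all
qed

end
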